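(* Let $\mu$ be a fixed probability distribution on a measurable space $\mathcal{X}$, $\varepsilon\ge0$, $\delta\in[0,1]$. For $\lambda\in[0,1]$ define the sampler $\mathbf{Q}_\lambda$ on all distributions $P$ on $\mathcal{X}$ by $\mathbf{Q}_\lambda(A\mid P)=\lambda P(A)+(1-\lambda)\mu(A)$ for measurable $A\subseteq\mathcal{X}$. If $\mathbf{Q}_{\lambda_1}$ is $(\varepsilon,\delta)$-LDP for some $\lambda_1\in[0,1]$, then $\mathbf{Q}_{\lambda_2}$ is $(\varepsilon,\delta)$-LDP for every $\lambda_2\in[0,\lambda_1]$.
   Context: A sampler $\mathbf{Q}$ defined on a class of distributions is $(\varepsilon,\delta)$-LDP if $\mathbf{Q}(A\mid P)\le e^\varepsilon\mathbf{Q}(A\mid P')+\delta$ for every pair of inputs $P,P'$ in its domain and every measurable $A$. *)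

theory Defs
  imports "HOL-Probability.Probability"
begin

definition distributions :: "'a measure \<Rightarrow> 'a measure set" where
  "distributions M = {P. prob_space P \<and> sets P = sets M}"

text \<open>A sampler maps each input distribution to a distribution on the output space,
  given by its probability function on measurable sets.
  (eps,delta)-LDP on a domain D of inputs, with output sigma-algebra given by M.\<close>
definition is_LDP :: "'a measure \<Rightarrow> 'b measure set \<Rightarrow> ('b measure \<Rightarrow> 'a set \<Rightarrow> real)
    \<Rightarrow> real \<Rightarrow> real \<Rightarrow> bool" where
  "is_LDP M D Q \<epsilon> \<delta> \<longleftrightarrow>
     (\<forall>P\<in>D. \<forall>P'\<in>D. \<forall>A\<in>sets M. Q P A \<le> exp \<epsilon> * Q P' A + \<delta>)"

definition mix_sampler :: "'a measure \<Rightarrow> real \<Rightarrow> 'a measure \<Rightarrow> 'a set \<Rightarrow> real" where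
  "mix_sampler \<mu> l P A = l * measure P A + (1 - l) * measure \<mu> A"

end

theory Submission
  imports Defs
begin

text \<open>Writing \<open>t = l\<^sub>2 / l\<^sub>1\<close>, the sampler \<open>Q\<^bsub>l\<^sub>2\<^esub>\<close> is the convex
  combination \<open>t Q\<^bsub>l\<^sub>1\<^esub> + (1 - t) Q\<^sub>0\<close>. The LDP inequality is linear in the sampler,
  so it survives convex combinations, and \<open>Q\<^sub>0 = \<mu>\<close> ignores its input and is
  trivially \<open>(\<epsilon>, \<delta>)\<close>-LDP.\<close>

lemma is_LDP_convex_combination:
  assumes "is_LDP M D Q\<^sub>1 \<epsilon> \<delta>" and "is_LDP M D Q\<^sub>2 \<epsilon> \<delta>"
    and "0 \<le> t" and "t \<le> 1"
  shows "is_LDP M D (\<lambda>P A. t * Q\<^sub>1 P A + (1 - t) * Q\<^sub>2 P A) \<epsilon> \<delta>"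
  unfolding is_LDP_def
proof (intro ballI)
  fix P P' A assume "P \<in> D" "P' \<in> D" "A \<in> sets M"
  then have "Q\<^sub>1 P A \<le> exp \<epsilon> * Q\<^sub>1 P' A + \<delta>" and "Q\<^sub>2 P A \<le> exp \<epsilon> * Q\<^sub>2 P' A + \<delta>"
    using assms(1,2) unfolding is_LDP_def by blast+
  then have "t * Q\<^sub>1 P A + (1 - t) * Q\<^sub>2 P A
      \<le> t * (exp \<epsilon> * Q\<^sub>1 P' A + \<delta>) + (1 - t) * (exp \<epsilon> * Q\<^sub>2 P' A + \<delta>)"
    using assms(3,4) by (intro add_mono mult_left_mono) auto
  also have "\<dots> = exp \<epsilon> * (t * Q\<^sub>1 P' A + (1 - t) * Q\<^sub>2 P' A) + \<delta>"
    by (simp add: algebra_simps)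
  finally show "t * Q\<^sub>1 P A + (1 - t) * Q\<^sub>2 P A
      \<le> exp \<epsilon> * (t * Q\<^sub>1 P' A + (1 - t) * Q\<^sub>2 P' A) + \<delta>" .
qed

lemma is_LDP_const_sampler:
  assumes "\<And>A. A \<in> sets M \<Longrightarrow> 0 \<le> q A" and "0 \<le> \<epsilon>" and "0 \<le> \<delta>"
  shows "is_LDP M D (\<lambda>P A. q A) \<epsilon> \<delta>"
  unfolding is_LDP_def
proof (intro ballI)
  fix A assume "A \<in> sets M"
  then have "q A \<le> exp \<epsilon> * q A"
    using assms(1,2) by (simp add: mult_right_mono[of 1 "exp \<epsilon>" "q A", simplified])
  then show "q A \<le> exp \<epsilon> * q A + \<delta>"
    using assms(3) by linarith
qed

lemma mix_sampler_0: "mix_sampler \<mu> 0 = (\<lambda>P A. measure \<mu> A)"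
  by (simp add: mix_sampler_def fun_eq_iff)

lemma mix_sampler_scale:
  "mix_sampler \<mu> (t * l) P A = t * mix_sampler \<mu> l P A + (1 - t) * mix_sampler \<mu> 0 P A"
  by (simp add: mix_sampler_def algebra_simps)

theorem lemma1:
  fixes \<mu> :: "'a measure" and \<epsilon> \<delta> l\<^sub>1 l\<^sub>2 :: real
  assumes "prob_space \<mu>"
    and "\<epsilon> \<ge> 0" and "0 \<le> \<delta>" and "\<delta> \<le> 1"
    and "0 \<le> l\<^sub>1" and "l\<^sub>1 \<le> 1"
    and "is_LDP \<mu> (distributions \<mu>) (mix_sampler \<mu> l\<^sub>1) \<epsilon> \<delta>"
    and "0 \<le> l\<^sub>2" and "l\<^sub>2 \<le> l\<^sub>1"
  shows "is_LDP \<mu> (distributions \<mu>) (mix_sampler \<mu> l\<^sub>2) \<epsilon> \<delta>"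
proof (cases "l\<^sub>1 = 0")
  case True
  with assms(7-9) show ?thesis by simp
next
  case False
  define t where "t = l\<^sub>2 / l\<^sub>1"
  have "0 \<le> t" "t \<le> 1" and l\<^sub>2_eq: "l\<^sub>2 = t * l\<^sub>1"
    using False assms(5,8,9) by (auto simp: t_def)
  have "is_LDP \<mu> (distributions \<mu>) (mix_sampler \<mu> 0) \<epsilon> \<delta>"
    unfolding mix_sampler_0 using assms(2,3) by (intro is_LDP_const_sampler) auto
  with assms(7) show ?thesis
    unfolding l\<^sub>2_eq mix_sampler_scale
    by (rule is_LDP_convex_combination) fact+
qed

end
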